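(* Let $n\ge2$, $\mathbb F\in\{\mathbb R,\mathbb C\}$, $A=(a^k_j)$ an $(n-1)\times(n-1)$ matrix over $\mathbb F$, and $\mathfrak a_A$ the Lie algebra with basis $e_1,\dots,e_n$ whose only nonzero brackets are $[e_j,e_n]=\sum_{k=1}^{n-1}a^k_je_k$, $j=1,\dots,n-1$ (and their antisymmetric counterparts). Let $\lambda_1,\dots,\lambda_{n-1}$ be the roots in $\mathbb C$ (with multiplicity) of the characteristic polynomial of $A$. If $p,q\in\mathbb N$ are such that $\mathrm{tr}(A^p)=\sum_i\lambda_i^p\ne0$, $\mathrm{tr}(A^q)=\sum_i\lambda_i^q\ne0$ and $\mathrm{tr}(A^{p+q})=\sum_i\lambda_i^{p+q}\ne0$, then $\mathfrak C_{pq}(\mathfrak a_A)$ is well defined and $$\mathfrak C_{pq}(\mathfrak a_A)=\frac{\mathrm{tr}(A^p)\,\mathrm{tr}(A^q)}{\mathrm{tr}(A^{p+q})}=\frac{(\lambda_1^p+\dots+\lambda_{n-1}^p)(\lambda_1^q+\dots+\lambda_{n-1}^q)}{\lambda_1^{p+q}+\dots+\lambda_{n-1}^{p+q}}.$$ Moreover, the rank of $\mathfrak a_A$ (the dimension of its Cartan subalgebras) equals the multiplicity of $0$ as a root of the characteristic polynomial of $A$, plus one.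
   Context: For $p,q\in\mathbb N$, $\mathfrak C_{pq}(\mathfrak g)$ is said to be well defined if there exist $u,v\in\mathfrak g$ with $\mathrm{tr}(\mathrm{ad}_u^{\,p})\ne0$, $\mathrm{tr}(\mathrm{ad}_v^{\,q})\ne0$, $\mathrm{tr}(\mathrm{ad}_u^{\,p}\mathrm{ad}_v^{\,q})\ne0$, and the value $\mathrm{tr}(\mathrm{ad}_u^{\,p})\,\mathrm{tr}(\mathrm{ad}_v^{\,q})/\mathrm{tr}(\mathrm{ad}_u^{\,p}\mathrm{ad}_v^{\,q})$ is the same for all such pairs $(u,v)$; this common value is $\mathfrak C_{pq}(\mathfrak g)$. *)

theory Defs
  imports "Jordan_Normal_Form.Jordan_Normal_Form" "Jordan_Normal_Form.VS_Connect"
begin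

text \<open>The Lie algebra a_A on F^n (vectors of dimension n, basis e_1..e_n is
  unit_vec n 0, ..., unit_vec n (n-1); so e_n is index n-1).  The matrix A is
  (n-1) x (n-1) with entry A $$ (k,j) = a^k_j (indices shifted by one), and
  the only nonzero brackets are [e_j,e_n] = sum_k a^k_j e_k (and antisymmetric).
  Extending bilinearly: [u,v] = sum_{j<n-1} (u_j v_n - u_n v_j) [e_j,e_n].\<close>
definition aA_bracket :: "'a::comm_ring_1 mat \<Rightarrow> nat \<Rightarrow> 'a vec \<Rightarrow> 'a vec \<Rightarrow> 'a vec" where
  "aA_bracket A n u v = vec n (\<lambda>k. if k < n - 1
      then (\<Sum>j<n - 1. A $$ (k, j) * (u $ j * v $ (n - 1) - u $ (n - 1) * v $ j))
      else 0)"

definition trace :: "'a::comm_ring_1 mat \<Rightarrow> 'a" where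
  "trace M = (\<Sum>i<dim_row M. M $$ (i, i))"

definition ad_mat :: "('a::comm_ring_1 vec \<Rightarrow> 'a vec \<Rightarrow> 'a vec) \<Rightarrow> nat \<Rightarrow> 'a vec \<Rightarrow> 'a mat" where
  "ad_mat br n u = mat n n (\<lambda>(i, l). br u (unit_vec n l) $ i)"

definition Cpq_well_defined_with_value ::
  "('a::field vec \<Rightarrow> 'a vec \<Rightarrow> 'a vec) \<Rightarrow> nat \<Rightarrow> nat \<Rightarrow> nat \<Rightarrow> 'a \<Rightarrow> bool" where
  "Cpq_well_defined_with_value br n p q c \<longleftrightarrow>
     (let adm = ad_mat br n;
          ok = (\<lambda>u v. trace (adm u ^\<^sub>m p) \<noteq> 0 \<and> trace (adm v ^\<^sub>m q) \<noteq> 0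
                    \<and> trace (adm u ^\<^sub>m p * adm v ^\<^sub>m q) \<noteq> 0)
      in (\<exists>u \<in> carrier_vec n. \<exists>v \<in> carrier_vec n. ok u v) \<and>
         (\<forall>u \<in> carrier_vec n. \<forall>v \<in> carrier_vec n. ok u v \<longrightarrow>
             trace (adm u ^\<^sub>m p) * trace (adm v ^\<^sub>m q) / trace (adm u ^\<^sub>m p * adm v ^\<^sub>m q) = c))"

definition lin_subspace :: "nat \<Rightarrow> 'a::field vec set \<Rightarrow> bool" where
  "lin_subspace n W \<longleftrightarrow> VectorSpace.subspace (class_ring :: 'a ring) W (module_vec TYPE('a) n)"

definition lin_dim :: "nat \<Rightarrow> 'a::field vec set \<Rightarrow> nat" where
  "lin_dim n W = vectorspace.dim (class_ring :: 'a ring) ((module_vec TYPE('a) n)\<lparr>carrier := W\<rparr>)"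

definition lin_span :: "nat \<Rightarrow> 'a::field vec set \<Rightarrow> 'a vec set" where
  "lin_span n S = module.span (class_ring :: 'a ring) (module_vec TYPE('a) n) S"

definition lie_subalgebra :: "('a::field vec \<Rightarrow> 'a vec \<Rightarrow> 'a vec) \<Rightarrow> nat \<Rightarrow> 'a vec set \<Rightarrow> bool" where
  "lie_subalgebra br n H \<longleftrightarrow> lin_subspace n H \<and> (\<forall>x\<in>H. \<forall>y\<in>H. br x y \<in> H)"

fun lower_central :: "('a::field vec \<Rightarrow> 'a vec \<Rightarrow> 'a vec) \<Rightarrow> nat \<Rightarrow> 'a vec set \<Rightarrow> nat \<Rightarrow> 'a vec set" where
  "lower_central br n H 0 = H"
| "lower_central br n H (Suc k) =
     lin_span n {br x y | x y. x \<in> H \<and> y \<in> lower_central br n H k}"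

definition lie_nilpotent :: "('a::field vec \<Rightarrow> 'a vec \<Rightarrow> 'a vec) \<Rightarrow> nat \<Rightarrow> 'a vec set \<Rightarrow> bool" where
  "lie_nilpotent br n H \<longleftrightarrow> (\<exists>k. lower_central br n H k = {0\<^sub>v n})"

definition lie_normalizer :: "('a::field vec \<Rightarrow> 'a vec \<Rightarrow> 'a vec) \<Rightarrow> nat \<Rightarrow> 'a vec set \<Rightarrow> 'a vec set" where
  "lie_normalizer br n H = {x \<in> carrier_vec n. \<forall>h\<in>H. br x h \<in> H}"

definition cartan_subalgebra :: "('a::field vec \<Rightarrow> 'a vec \<Rightarrow> 'a vec) \<Rightarrow> nat \<Rightarrow> 'a vec set \<Rightarrow> bool" where
  "cartan_subalgebra br n H \<longleftrightarrow>
     lie_subalgebra br n H \<and> lie_nilpotent br n H \<and> lie_normalizer br n H = H"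

end

theory Submission
  imports Defs "Jordan_Normal_Form.Schur_Decomposition" "Jordan_Normal_Form.Jordan_Normal_Form_Uniqueness"
    "Jordan_Normal_Form.Jordan_Normal_Form_Existence"
begin

text \<open>Write \<open>N = n - 1\<close>, \<open>u'\<close> for the first \<open>N\<close> coordinates of \<open>u\<close> and \<open>u\<^sub>N\<close> for the last one.
  Then \<open>[u, v] = (A (v\<^sub>N u' - u\<^sub>N v'), 0)\<close>, so \<open>ad u\<close> is block upper triangular with diagonal
  blocks \<open>-u\<^sub>N A\<close> and \<open>0\<close>. Hence \<open>tr (ad u ^ p) = (-u\<^sub>N)^p tr (A^p)\<close> and
  \<open>tr (ad u ^ p ad v ^ q) = (-u\<^sub>N)^p (-v\<^sub>N)^q tr (A^(p+q))\<close>; the scalar factors cancel in the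
  quotient, and \<open>tr (A^k)\<close> is the \<open>k\<close>-th power sum of the eigenvalues by Schur triangularisation.

  For the rank, \<open>ad e\<^sub>n\<close> acts as \<open>-A\<close> on the first \<open>N\<close> coordinates and kills \<open>e\<^sub>n\<close>, so its Fitting
  null component \<open>ker (A^N) \<oplus> F e\<^sub>n\<close> is a Cartan subalgebra. Conversely, a Cartan subalgebra \<open>H\<close>
  contains some \<open>x\<close> with \<open>x\<^sub>N \<noteq> 0\<close> (else \<open>e\<^sub>n\<close> would normalise \<open>H\<close> without lying in it). On the part of \<open>H\<close> with
  vanishing last coordinate, \<open>ad x\<close> acts as \<open>-x\<^sub>N A\<close>, so nilpotency of \<open>H\<close> puts that part into
  \<open>ker (A^N)\<close>, while self-normalisation pulls all of \<open>ker (A^N)\<close> into \<open>H\<close>. Thus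
  \<open>H = ker (A^N) \<oplus> F x\<close>, and \<open>dim ker (A^N)\<close> is the multiplicity of the eigenvalue \<open>0\<close>
  by the Jordan normal form.\<close>

section \<open>Traces and powers of matrices\<close>

lemma trace_mult_commute:
  fixes X :: "'a::comm_ring_1 mat"
  assumes "X \<in> carrier_mat n m" "Y \<in> carrier_mat m n"
  shows "trace (X * Y) = trace (Y * X)"
proof -
  have "trace (X * Y) = (\<Sum>i<n. \<Sum>k<m. X $$ (i,k) * Y $$ (k,i))"
    using assms by (simp add: trace_def scalar_prod_def atLeast0LessThan)
  also have "\<dots> = (\<Sum>k<m. \<Sum>i<n. Y $$ (k,i) * X $$ (i,k))"
    by (subst sum.swap) (simp add: mult.commute)
  also have "\<dots> = trace (Y * X)"
    using assms by (simp add: trace_def scalar_prod_def atLeast0LessThan)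
  finally show ?thesis .
qed

lemma trace_similar_mat:
  fixes X :: "'a::comm_ring_1 mat"
  assumes "similar_mat X Y"
  shows "trace X = trace Y"
proof -
  from similar_matD[OF assms] obtain n P Q where "{X, Y, P, Q} \<subseteq> carrier_mat n n"
    and QP: "Q * P = 1\<^sub>m n" and XY: "X = P * Y * Q" by blast
  then have P: "P \<in> carrier_mat n n" and Y: "Y \<in> carrier_mat n n" and Q: "Q \<in> carrier_mat n n"
    by auto
  have "trace X = trace (P * (Y * Q))" using XY P Y Q by (simp add: assoc_mult_mat)
  also have "\<dots> = trace ((Y * Q) * P)" using P Y Q by (intro trace_mult_commute) auto
  also have "\<dots> = trace (Y * (Q * P))" using P Y Q by (simp add: assoc_mult_mat)
  also have "\<dots> = trace Y" using QP Y by simp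
  finally show ?thesis .
qed

lemma trace_smult_mat: "X \<in> carrier_mat n n \<Longrightarrow> trace (c \<cdot>\<^sub>m X) = c * trace X"
  unfolding trace_def by (simp add: sum_distrib_left)

lemma (in comm_ring_hom) trace_map_mat:
  "X \<in> carrier_mat n n \<Longrightarrow> trace (map_mat hom X) = hom (trace X)"
  unfolding trace_def by (simp add: hom_sum)

lemma upper_triangular_mult:
  fixes X :: "'a::comm_ring_1 mat"
  assumes X: "X \<in> carrier_mat n n" and Y: "Y \<in> carrier_mat n n"
    and uX: "upper_triangular X" and uY: "upper_triangular Y"
  shows "upper_triangular (X * Y)"
proof (rule upper_triangularI)
  fix i j assume ji: "j < i" and "i < dim_row (X * Y)"
  then have i: "i < n" using X by auto
  have "(X * Y) $$ (i,j) = (\<Sum>k<n. X $$ (i,k) * Y $$ (k,j))"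
    using X Y i ji by (simp add: scalar_prod_def atLeast0LessThan)
  also have "\<dots> = 0"
  proof (rule sum.neutral, intro ballI)
    fix k assume k: "k \<in> {..<n}"
    show "X $$ (i,k) * Y $$ (k,j) = 0"
    proof (cases "k < i")
      case True
      then show ?thesis using upper_triangularD[OF uX] i X by simp
    next
      case False
      then have "j < k" using ji by simp
      then show ?thesis using upper_triangularD[OF uY] k Y by simp
    qed
  qed
  finally show "(X * Y) $$ (i,j) = 0" .
qed

lemma diag_mult_upper_triangular:
  fixes X :: "'a::comm_ring_1 mat"
  assumes X: "X \<in> carrier_mat n n" and Y: "Y \<in> carrier_mat n n"
    and uX: "upper_triangular X" and uY: "upper_triangular Y" and i: "i < n"
  shows "(X * Y) $$ (i,i) = X $$ (i,i) * Y $$ (i,i)"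
proof -
  have "(X * Y) $$ (i,i) = (\<Sum>k<n. X $$ (i,k) * Y $$ (k,i))"
    using X Y i by (simp add: scalar_prod_def atLeast0LessThan)
  also have "\<dots> = (\<Sum>k\<in>{i}. X $$ (i,k) * Y $$ (k,i))"
  proof (rule sum.mono_neutral_right)
    show "\<forall>k\<in>{..<n} - {i}. X $$ (i,k) * Y $$ (k,i) = 0"
    proof
      fix k assume k: "k \<in> {..<n} - {i}"
      show "X $$ (i,k) * Y $$ (k,i) = 0"
      proof (cases "k < i")
        case True
        then show ?thesis using upper_triangularD[OF uX] i X by simp
      next
        case False
        then have "i < k" using k by simp
        then show ?thesis using upper_triangularD[OF uY] k Y by simp
      qed
    qed
  qed (use i in auto)
  finally show ?thesis by simp
qed

lemma upper_triangular_pow_mat: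
  fixes X :: "'a::comm_ring_1 mat"
  assumes X: "X \<in> carrier_mat n n" and uX: "upper_triangular X"
  shows "upper_triangular (X ^\<^sub>m k)"
proof (induction k)
  case (Suc k)
  then show ?case using upper_triangular_mult[OF pow_carrier_mat[OF X] X _ uX] by simp
qed simp

lemma diag_pow_mat_upper_triangular:
  fixes X :: "'a::comm_ring_1 mat"
  assumes X: "X \<in> carrier_mat n n" and uX: "upper_triangular X" and i: "i < n"
  shows "(X ^\<^sub>m k) $$ (i,i) = (X $$ (i,i)) ^ k"
proof (induction k)
  case 0
  then show ?case using X i by simp
next
  case (Suc k)
  then show ?case
    using diag_mult_upper_triangular[OF pow_carrier_mat[OF X] X upper_triangular_pow_mat[OF X uX] uX i]
    by simp
qed

lemma trace_pow_mat_char_poly: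
  fixes X :: "complex mat"
  assumes X: "X \<in> carrier_mat n n"
    and cp: "char_poly X = (\<Prod>l\<leftarrow>lam. [:- l, 1:])"
  shows "trace (X ^\<^sub>m k) = (\<Sum>l\<leftarrow>lam. l ^ k)"
proof -
  obtain B P Q where sd: "schur_decomposition X lam = (B,P,Q)"
    by (cases "schur_decomposition X lam") auto
  from schur_decomposition[OF X cp sd] have w: "similar_mat_wit X B P Q"
    and uB: "upper_triangular B" and dB: "diag_mat B = lam" by auto
  from similar_mat_witD2[OF X w] have B: "B \<in> carrier_mat n n" by auto
  have "similar_mat (X ^\<^sub>m k) (B ^\<^sub>m k)"
    using similar_mat_wit_pow[OF w] unfolding similar_mat_def by blast
  then have "trace (X ^\<^sub>m k) = trace (B ^\<^sub>m k)" by (rule trace_similar_mat)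
  also have "\<dots> = (\<Sum>i<n. (B $$ (i,i)) ^ k)"
    using diag_pow_mat_upper_triangular[OF B uB] B unfolding trace_def by simp
  also have "\<dots> = (\<Sum>l\<leftarrow>diag_mat B. l ^ k)"
    using B unfolding diag_mat_def by (simp add: sum_list_sum_nth atLeast0LessThan)
  finally show ?thesis using dB by simp
qed

lemma trace_pow_mat_of_real_char_poly:
  fixes X :: "real mat"
  assumes X: "X \<in> carrier_mat n n"
    and cp: "char_poly (map_mat complex_of_real X) = (\<Prod>l\<leftarrow>lam. [:- l, 1:])"
  shows "complex_of_real (trace (X ^\<^sub>m k)) = (\<Sum>l\<leftarrow>lam. l ^ k)"
proof -
  have "complex_of_real (trace (X ^\<^sub>m k)) = trace (map_mat complex_of_real (X ^\<^sub>m k))"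
    using X by (simp add: of_real_hom.trace_map_mat[of _ n])
  also have "map_mat complex_of_real (X ^\<^sub>m k) = map_mat complex_of_real X ^\<^sub>m k"
    by (rule of_real_hom.mat_hom_pow[OF X])
  also have "trace \<dots> = (\<Sum>l\<leftarrow>lam. l ^ k)"
    using X cp by (intro trace_pow_mat_char_poly[of _ n]) auto
  finally show ?thesis .
qed

lemma pow_mat_add:
  fixes X :: "'a::semiring_1 mat"
  assumes X: "X \<in> carrier_mat n n"
  shows "X ^\<^sub>m k * X ^\<^sub>m l = X ^\<^sub>m (k + l)"
proof (induction l)
  case 0
  then show ?case using X by simp
next
  case (Suc l)
  have "X ^\<^sub>m k * X ^\<^sub>m Suc l = (X ^\<^sub>m k * X ^\<^sub>m l) * X"
    using X by (simp add: assoc_mult_mat[of _ n n _ n _ n])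
  then show ?case using Suc by simp
qed

lemma pow_mat_commute:
  fixes X :: "'a::semiring_1 mat"
  assumes X: "X \<in> carrier_mat n n"
  shows "X ^\<^sub>m k * X = X * X ^\<^sub>m k"
  using pow_mat_add[OF X, of k 1] pow_mat_add[OF X, of 1 k] X by (simp add: add.commute)

lemma smult_pow_mat:
  fixes X :: "'a::comm_ring_1 mat"
  assumes X: "X \<in> carrier_mat n n"
  shows "(c \<cdot>\<^sub>m X) ^\<^sub>m k = c ^ k \<cdot>\<^sub>m (X ^\<^sub>m k)"
proof (induction k)
  case 0
  then show ?case using X by (auto intro!: eq_matI)
next
  case (Suc k)
  have Xk: "X ^\<^sub>m k \<in> carrier_mat n n" using X by simp
  have "(c \<cdot>\<^sub>m X) ^\<^sub>m Suc k = c ^ k \<cdot>\<^sub>m (X ^\<^sub>m k) * (c \<cdot>\<^sub>m X)" using Suc by simp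
  also have "\<dots> = c ^ k \<cdot>\<^sub>m (X ^\<^sub>m k * (c \<cdot>\<^sub>m X))"
    using X Xk by (intro mult_smult_assoc_mat) auto
  also have "\<dots> = c ^ k \<cdot>\<^sub>m (c \<cdot>\<^sub>m (X ^\<^sub>m k * X))"
    using mult_smult_distrib[OF Xk X] by simp
  also have "\<dots> = c ^ Suc k \<cdot>\<^sub>m (X ^\<^sub>m Suc k)"
    by (rule eq_matI) (auto simp: mult.commute)
  finally show ?case .
qed

lemma pow_mat_Suc_mult_mat_vec:
  fixes X :: "'a::comm_ring_1 mat"
  assumes X: "X \<in> carrier_mat n n" and w: "w \<in> carrier_vec n"
  shows "X ^\<^sub>m j *\<^sub>v (X *\<^sub>v w) = X ^\<^sub>m (Suc j) *\<^sub>v w"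
  using assoc_mult_mat_vec[of "X ^\<^sub>m j" n n X n w] X w by simp

lemma pow_mat_mult_vec_commute:
  fixes X :: "'a::comm_ring_1 mat"
  assumes X: "X \<in> carrier_mat n n" and w: "w \<in> carrier_vec n"
  shows "X ^\<^sub>m j *\<^sub>v (X *\<^sub>v w) = X *\<^sub>v (X ^\<^sub>m j *\<^sub>v w)"
  using pow_mat_commute[OF X, of j] X w
  by (simp add: assoc_mult_mat_vec[symmetric, of _ n n _ n w])

lemma mult_mat_vec_smult_diff:
  fixes M :: "'a::field mat"
  assumes M: "M \<in> carrier_mat m n" and x: "x \<in> carrier_vec n" and y: "y \<in> carrier_vec n"
  shows "M *\<^sub>v (a \<cdot>\<^sub>v x - b \<cdot>\<^sub>v y) = a \<cdot>\<^sub>v (M *\<^sub>v x) - b \<cdot>\<^sub>v (M *\<^sub>v y)"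
  using M x y by (simp add: mult_minus_distrib_mat_vec mult_mat_vec[OF M x] mult_mat_vec[OF M y])

lemma smult_zero_vec[simp]: "k \<cdot>\<^sub>v 0\<^sub>v n = (0\<^sub>v n :: 'a::mult_zero vec)"
  by (intro eq_vecI) auto

lemma mult_mat_vec_zero[simp]: "M \<in> carrier_mat m n \<Longrightarrow> M *\<^sub>v 0\<^sub>v n = (0\<^sub>v m :: 'a::semiring_0 vec)"
  by (intro eq_vecI) (auto simp: scalar_prod_def)

lemma smult_vec_eq_zero:
  fixes v :: "'a::field vec"
  assumes "c \<cdot>\<^sub>v v = 0\<^sub>v n" "c \<noteq> 0" "v \<in> carrier_vec n"
  shows "v = 0\<^sub>v n"
proof (rule eq_vecI)
  fix i assume "i < dim_vec (0\<^sub>v n :: 'a vec)"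
  then have i: "i < n" by simp
  from arg_cong[OF assms(1), of "\<lambda>w. w $ i"] i assms(3) have "c * v $ i = 0" by simp
  then show "v $ i = 0\<^sub>v n $ i" using assms(2) i by simp
qed (use assms in auto)

section \<open>Subspaces and kernels\<close>

lemma lin_subspace_mat_kernel:
  fixes M :: "'a::field mat"
  assumes M: "M \<in> carrier_mat nr nc"
  shows "lin_subspace nc (mat_kernel M)"
proof -
  interpret V: vec_space "TYPE('a)" nc .
  have "submodule class_ring (mat_kernel M) (module_vec TYPE('a) nc)"
  proof (unfold submodule_def, intro conjI)
    show "module class_ring (module_vec TYPE('a) nc)" by (rule vec_module)
    show "mat_kernel M \<subseteq> carrier (module_vec TYPE('a) nc)"
      using mat_kernel_carrier[OF M] by (simp add: module_vec_simps)
  qed (use M in \<open>auto simp: module_vec_simps class_ring_simps mat_kernel_def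
      mult_add_distrib_mat_vec mult_mat_vec\<close>)
  then show ?thesis unfolding lin_subspace_def subspace_def using vec_vs by auto
qed

lemma lin_dim_mat_kernel:
  fixes M :: "'a::field mat"
  assumes "M \<in> carrier_mat nr nc"
  shows "lin_dim nc (mat_kernel M) = kernel_dim M"
  using assms unfolding lin_dim_def kernel_dim_def by auto

lemma lin_subspaceD:
  fixes W :: "'a::field vec set"
  assumes "lin_subspace n W"
  shows "W \<subseteq> carrier_vec n" "0\<^sub>v n \<in> W"
    "\<And>x y. x \<in> W \<Longrightarrow> y \<in> W \<Longrightarrow> x + y \<in> W"
    "\<And>a x. x \<in> W \<Longrightarrow> a \<cdot>\<^sub>v x \<in> W"
proof -
  have sm: "submodule class_ring W (module_vec TYPE('a) n)"
    using assms unfolding lin_subspace_def subspace_def by auto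
  show "W \<subseteq> carrier_vec n" using submodule.subset[OF sm] by (simp add: module_vec_simps)
  show "0\<^sub>v n \<in> W" using submodule.zero_closed[OF sm] by (simp add: module_vec_simps)
  show "\<And>x y. x \<in> W \<Longrightarrow> y \<in> W \<Longrightarrow> x + y \<in> W"
    using submodule.m_closed[OF sm] by (simp add: module_vec_simps)
  show "\<And>a x. x \<in> W \<Longrightarrow> a \<cdot>\<^sub>v x \<in> W"
    using submodule.smult_closed[OF sm] by (simp add: module_vec_simps class_ring_simps)
qed

lemma lin_subspace_diff:
  fixes W :: "'a::field vec set"
  assumes W: "lin_subspace n W" and x: "x \<in> W" and y: "y \<in> W"
  shows "x - y \<in> W"
proof -
  have "x - y = x + (-1) \<cdot>\<^sub>v y" using x y lin_subspaceD(1)[OF W] by (intro eq_vecI) auto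
  then show ?thesis using lin_subspaceD(3,4)[OF W] x y by metis
qed

lemma lin_span_subset:
  fixes W :: "'a::field vec set"
  assumes "lin_subspace n W" "S \<subseteq> W"
  shows "lin_span n S \<subseteq> W"
proof -
  interpret V: vec_space "TYPE('a)" n .
  have "submodule class_ring W (module_vec TYPE('a) n)"
    using assms unfolding lin_subspace_def subspace_def by auto
  then show ?thesis unfolding lin_span_def by (rule V.span_is_subset[OF assms(2)])
qed

lemma zero_in_lin_span: "(0\<^sub>v n :: 'a::field vec) \<in> lin_span n S"
proof -
  interpret V: vec_space "TYPE('a)" n .
  show ?thesis unfolding lin_span_def using V.span_zero by simp
qed

lemma in_lin_span:
  fixes S :: "'a::field vec set"
  assumes "S \<subseteq> carrier_vec n" "x \<in> S"
  shows "x \<in> lin_span n S"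
proof -
  interpret V: vec_space "TYPE('a)" n .
  show ?thesis unfolding lin_span_def using V.in_own_span[of S] assms by auto
qed

lemma mat_kernel_eq_of_subset_of_dim:
  fixes M1 M2 :: "'a::field mat"
  assumes M1: "M1 \<in> carrier_mat nr1 nc" and M2: "M2 \<in> carrier_mat nr2 nc"
    and sub: "mat_kernel M1 \<subseteq> mat_kernel M2" and dim: "kernel_dim M1 = kernel_dim M2"
  shows "mat_kernel M1 = mat_kernel M2"
proof -
  interpret K1: kernel nr1 nc M1 by (unfold_locales) (rule M1)
  interpret K2: kernel nr2 nc M2 by (unfold_locales) (rule M2)
  have sm1: "submodule class_ring (mat_kernel M1) (module_vec TYPE('a) nc)"
    using lin_subspace_mat_kernel[OF M1] unfolding lin_subspace_def subspace_def by auto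
  have sm2: "submodule class_ring (mat_kernel M2) (module_vec TYPE('a) nc)"
    using lin_subspace_mat_kernel[OF M2] unfolding lin_subspace_def subspace_def by auto
  obtain b where fin: "finite b" and bas: "K1.basis b" using kernel_basis_exists[OF M1] by auto
  obtain b2 where "finite b2" and "K2.basis b2" using kernel_basis_exists[OF M2] by auto
  then have fd2: "K2.Ker.fin_dim" unfolding K2.Ker.fin_dim_def K2.Ker.basis_def by auto
  from bas have li1: "K1.lin_indpt b" and gen1: "K1.span b = mat_kernel M1"
    and b1: "b \<subseteq> mat_kernel M1"
    unfolding K1.Ker.basis_def by auto
  have b2: "b \<subseteq> mat_kernel M2" using b1 sub by auto
  \<comment> \<open>Spans and linear independence inside a kernel agree with those in the ambient space.\<close>
  note ambient1 = module.span_li_not_depend[OF vec_module b1 sm1]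
  note ambient2 = module.span_li_not_depend[OF vec_module b2 sm2]
  have "K2.lin_indpt b" using li1 ambient1(2) ambient2(2) by simp
  moreover have "card b = K2.dim" using K1.Ker.dim_basis[OF fin bas] dim by simp
  ultimately have "K2.basis b" by (intro K2.Ker.dim_li_is_basis[OF fd2 fin b2]) auto
  then have "K2.span b = mat_kernel M2" unfolding K2.Ker.basis_def by auto
  then show ?thesis using gen1 ambient1(1) ambient2(1) by simp
qed

lemma mat_kernel_pow_mono:
  fixes A :: "'a::field mat"
  assumes A: "A \<in> carrier_mat n n" and jk: "j \<le> k"
  shows "mat_kernel (A ^\<^sub>m j) \<subseteq> mat_kernel (A ^\<^sub>m k)"
proof
  fix w assume w: "w \<in> mat_kernel (A ^\<^sub>m j)"
  from mat_kernelD[OF pow_carrier_mat[OF A] w] have wc: "w \<in> carrier_vec n"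
    and Ajw: "A ^\<^sub>m j *\<^sub>v w = 0\<^sub>v n" by auto
  have "A ^\<^sub>m k = A ^\<^sub>m (k - j) * A ^\<^sub>m j" using pow_mat_add[OF A, of "k - j" j] jk by simp
  then have "A ^\<^sub>m k *\<^sub>v w = A ^\<^sub>m (k - j) *\<^sub>v (A ^\<^sub>m j *\<^sub>v w)"
    using A wc by (simp add: assoc_mult_mat_vec[of _ n n _ n w])
  also have "\<dots> = 0\<^sub>v n" using A Ajw by auto
  finally show "w \<in> mat_kernel (A ^\<^sub>m k)" by (rule mat_kernelI[OF pow_carrier_mat[OF A] wc])
qed

lemma mat_kernel_pow_subset_of_dim:
  fixes A :: "'a::field mat"
  assumes A: "A \<in> carrier_mat n n"
    and dim: "\<And>k. k \<ge> n \<Longrightarrow> kernel_dim (A ^\<^sub>m k) = kernel_dim (A ^\<^sub>m n)"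
  shows "mat_kernel (A ^\<^sub>m k) \<subseteq> mat_kernel (A ^\<^sub>m n)"
proof (cases "k \<le> n")
  case True
  then show ?thesis by (rule mat_kernel_pow_mono[OF A])
next
  case False
  then have "mat_kernel (A ^\<^sub>m n) = mat_kernel (A ^\<^sub>m k)"
    using dim[of k] mat_kernel_pow_mono[OF A, of n k]
    by (intro mat_kernel_eq_of_subset_of_dim[OF pow_carrier_mat[OF A] pow_carrier_mat[OF A]]) auto
  then show ?thesis by simp
qed

lemma kernel_dim_zero_mat: "kernel.dim n (0\<^sub>m m n :: 'a::field mat) = n"
proof -
  interpret K: kernel m n "0\<^sub>m m n :: 'a mat" by unfold_locales auto
  have "mat_kernel (0\<^sub>m m n :: 'a mat) = carrier_vec n" unfolding mat_kernel_def by auto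
  then have "K.VK = module_vec TYPE('a) n" by (simp add: module_vec_simps module_vec_def)
  then show ?thesis using K.NC.dim_is_n by simp
qed

lemma kernel_dim_row_echelon_form:
  fixes C :: "'a::field mat"
  assumes "row_echelon_form C" "C \<in> carrier_mat nr nc"
  shows "kernel_dim C = nc - card {i. i < nr \<and> row C i \<noteq> 0\<^sub>v nc}"
  using find_base_vectors(6)[OF assms] assms(2) unfolding kernel_dim_def by simp

lemma kernel_dim_mult_invertible:
  fixes M :: "'a::field mat"
  assumes M: "M \<in> carrier_mat nr nc" and P: "P \<in> carrier_mat nr nr" and Q: "Q \<in> carrier_mat nr nr"
    and QP: "Q * P = 1\<^sub>m nr"
  shows "kernel_dim (P * M) = kernel_dim M"
proof -
  have "mat_kernel (P * M) = mat_kernel M" by (rule mat_kernel_mult_eq[OF M P Q QP])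
  then show ?thesis
    using lin_dim_mat_kernel[OF M] lin_dim_mat_kernel[of "P * M" nr nc] M P by simp
qed

lemma row_eq_zero_iff:
  fixes X :: "'a::zero mat"
  assumes X: "X \<in> carrier_mat nr nc" and i: "i < nr"
  shows "row X i = 0\<^sub>v nc \<longleftrightarrow> (\<forall>j<nc. X $$ (i,j) = 0)"
  using X i by (auto simp: vec_eq_iff)

lemma (in field_hom) kernel_dim_map_mat:
  assumes M: "M \<in> carrier_mat nr nc"
  shows "kernel_dim (map_mat hom M) = kernel_dim M"
proof -
  obtain C where gj: "gauss_jordan_single M = C" by auto
  note gauss = gauss_jordan_single[OF M gj]
  have C: "C \<in> carrier_mat nr nc" and ref: "row_echelon_form C" by (fact gauss(2), fact gauss(3))
  from gauss(4) obtain P Q where CPM: "C = P * M" and P: "P \<in> carrier_mat nr nr"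
    and Q: "Q \<in> carrier_mat nr nr" and QP: "Q * P = 1\<^sub>m nr" by auto
  have hQP: "map_mat hom Q * map_mat hom P = 1\<^sub>m nr"
    using mat_hom_mult[OF Q P, symmetric] QP by (simp add: mat_hom_one)
  have hC: "map_mat hom C = map_mat hom P * map_mat hom M" unfolding CPM by (rule mat_hom_mult[OF P M])
  have "row_echelon_form (map_mat hom C)"
  proof -
    from ref obtain f where "pivot_fun C f (dim_col C)" unfolding row_echelon_form_def by auto
    then have "pivot_fun (map_mat hom C) f (dim_col (map_mat hom C))"
      using C unfolding pivot_fun_def Let_def by auto
    then show ?thesis unfolding row_echelon_form_def by auto
  qed
  then have "kernel_dim (map_mat hom C) = nc - card {i. i < nr \<and> row (map_mat hom C) i \<noteq> 0\<^sub>v nc}"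
    using C by (intro kernel_dim_row_echelon_form) auto
  also have "{i. i < nr \<and> row (map_mat hom C) i \<noteq> 0\<^sub>v nc} = {i. i < nr \<and> row C i \<noteq> 0\<^sub>v nc}"
    using row_eq_zero_iff[OF C] row_eq_zero_iff[of "map_mat hom C" nr nc] C by auto
  also have "nc - card \<dots> = kernel_dim C" using kernel_dim_row_echelon_form[OF ref C] by simp
  finally show ?thesis
    using kernel_dim_mult_invertible[OF M P Q QP] hC P Q M
      kernel_dim_mult_invertible[of "map_mat hom M" nr nc "map_mat hom P" "map_mat hom Q"] hQP
    by (simp add: CPM)
qed

lemma kernel_dim_pow_mat_eq_order:
  fixes A :: "complex mat"
  assumes A: "A \<in> carrier_mat n n" and k: "k \<ge> n"
  shows "kernel_dim (A ^\<^sub>m k) = Polynomial.order 0 (char_poly A)"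
proof -
  from char_poly_factorized[OF A] obtain as where "char_poly A = (\<Prod>a\<leftarrow>as. [:- a, 1:])" by auto
  from jordan_nf_exists[OF A this] obtain n_as where jnf: "jordan_nf A n_as" by auto
  have n: "n = sum_list (map fst n_as)"
  proof -
    from jnf have "similar_mat A (jordan_matrix n_as)" unfolding jordan_nf_def by auto
    from similar_matD[OF this] obtain n' where "{A, jordan_matrix n_as} \<subseteq> carrier_mat n' n'" by blast
    then show ?thesis using A jordan_matrix_carrier[of n_as] unfolding carrier_mat_def by auto
  qed
  \<comment> \<open>Every Jordan block has size at most \<open>n \<le> k\<close>, so \<open>A^k\<close> kills each block for eigenvalue 0.\<close>
  have block_le: "min k m = m" if "m \<in> set (map fst n_as)" for m
    using member_le_sum_list[OF that] n k by simp
  have "char_matrix A 0 = A" unfolding char_matrix_def using A by (intro eq_matI) auto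
  then have "kernel_dim (A ^\<^sub>m k) = dim_gen_eigenspace A 0 k" unfolding dim_gen_eigenspace_def by simp
  also have "\<dots> = (\<Sum>m\<leftarrow>map fst [(m, e)\<leftarrow>n_as. e = 0]. min k m)" by (rule dim_gen_eigenspace[OF jnf])
  also have "\<dots> = sum_list (map fst [(m, e)\<leftarrow>n_as. e = 0])"
    using block_le by (intro arg_cong[of _ _ sum_list] map_idI) auto
  also have "[(m, e)\<leftarrow>n_as. e = 0] = filter (\<lambda>me. snd me = 0) n_as" by (rule filter_cong) auto
  also have "sum_list (map fst \<dots>) = Polynomial.order 0 (char_poly A)" unfolding jordan_nf_order[OF jnf] ..
  finally show ?thesis .
qed

lemma kernel_dim_pow_mat_eq_order_real:
  fixes A :: "real mat"
  assumes A: "A \<in> carrier_mat n n" and k: "k \<ge> n"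
  shows "kernel_dim (A ^\<^sub>m k) = Polynomial.order 0 (char_poly A)"
proof -
  interpret of_real_poly: map_poly_inj_idom_divide_hom "complex_of_real :: real \<Rightarrow> complex" ..
  have "kernel_dim (A ^\<^sub>m k) = kernel_dim (map_mat complex_of_real (A ^\<^sub>m k))"
    by (rule of_real_hom.kernel_dim_map_mat[OF pow_carrier_mat[OF A], symmetric])
  also have "\<dots> = kernel_dim (map_mat complex_of_real A ^\<^sub>m k)"
    by (simp only: of_real_hom.mat_hom_pow[OF A])
  also have "\<dots> = Polynomial.order 0 (char_poly (map_mat complex_of_real A))"
    using A k by (intro kernel_dim_pow_mat_eq_order[of _ n]) auto
  also have "char_poly (map_mat complex_of_real A) = map_poly complex_of_real (char_poly A)"
    by (rule of_real_hom.char_poly_hom[OF A])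
  also have "Polynomial.order 0 \<dots> = Polynomial.order 0 (char_poly A)"
    using of_real_poly.order_hom[of 0 "char_poly A"] by simp
  finally show ?thesis .
qed

section \<open>Block matrices and the bracket of \<open>\<aa>\<^sub>A\<close>\<close>

lemma index_vec_first[simp]: "i < n \<Longrightarrow> vec_first v n $ i = v $ i"
  unfolding vec_first_def by simp

lemma vec_first_diff:
  "v \<in> carrier_vec (Suc n) \<Longrightarrow> w \<in> carrier_vec (Suc n) \<Longrightarrow>
    vec_first (v - w) n = vec_first v n - (vec_first w n :: 'a::minus vec)"
  by (intro eq_vecI) auto

lemma vec_first_smult:
  "v \<in> carrier_vec (Suc n) \<Longrightarrow> vec_first (a \<cdot>\<^sub>v v) n = a \<cdot>\<^sub>v (vec_first v n :: 'a::times vec)"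
  by (intro eq_vecI) auto

lemma vec_first_unit_vec_last: "vec_first (unit_vec (Suc n) n) n = (0\<^sub>v n :: 'a::zero_neq_one vec)"
  by (intro eq_vecI) auto

definition embed_vec :: "nat \<Rightarrow> 'a::zero vec \<Rightarrow> 'a vec" where
  "embed_vec n w = vec (Suc n) (\<lambda>k. if k < n then w $ k else 0)"

lemma embed_vec_carrier[simp]: "embed_vec n w \<in> carrier_vec (Suc n)"
  and dim_embed_vec[simp]: "dim_vec (embed_vec n w) = Suc n"
  and index_embed_vec_last[simp]: "embed_vec n w $ n = 0"
  unfolding embed_vec_def by auto

lemma vec_first_embed_vec[simp]: "w \<in> carrier_vec n \<Longrightarrow> vec_first (embed_vec n w) n = w"
  unfolding embed_vec_def by (intro eq_vecI) auto

lemma embed_vec_vec_first: "v \<in> carrier_vec (Suc n) \<Longrightarrow> v $ n = 0 \<Longrightarrow> embed_vec n (vec_first v n) = v"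
  unfolding embed_vec_def by (intro eq_vecI) (auto simp: less_Suc_eq)

lemma embed_vec_smult:
  "w \<in> carrier_vec n \<Longrightarrow> embed_vec n (a \<cdot>\<^sub>v w) = (a :: 'a::comm_ring_1) \<cdot>\<^sub>v embed_vec n w"
  unfolding embed_vec_def by (intro eq_vecI) auto

lemma embed_vec_zero[simp]: "embed_vec n (0\<^sub>v n) = (0\<^sub>v (Suc n) :: 'a::zero vec)"
  unfolding embed_vec_def by (intro eq_vecI) auto

lemma embed_vec_eq_zero_iff:
  "w \<in> carrier_vec n \<Longrightarrow> embed_vec n w = 0\<^sub>v (Suc n) \<longleftrightarrow> w = (0\<^sub>v n :: 'a::zero vec)"
  by (metis embed_vec_zero vec_first_embed_vec zero_carrier_vec)

definition border_mat :: "nat \<Rightarrow> 'a::zero mat \<Rightarrow> 'a vec \<Rightarrow> 'a \<Rightarrow> 'a mat" where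
  "border_mat n X y c = mat (Suc n) (Suc n) (\<lambda>(i,j).
     if i < n then (if j < n then X $$ (i,j) else y $ i) else (if j = n then c else 0))"

lemma border_mat_carrier[simp]: "border_mat n X y c \<in> carrier_mat (Suc n) (Suc n)"
  and dim_border_mat[simp]: "dim_row (border_mat n X y c) = Suc n" "dim_col (border_mat n X y c) = Suc n"
  unfolding border_mat_def by auto

lemma trace_border_mat: "X \<in> carrier_mat n n \<Longrightarrow> trace (border_mat n X y c) = trace X + c"
  unfolding trace_def border_mat_def by simp

lemma border_mat_mult:
  fixes X :: "'a::comm_ring_1 mat"
  assumes X: "X \<in> carrier_mat n n" "X' \<in> carrier_mat n n" and y: "y' \<in> carrier_vec n"
  shows "border_mat n X y 0 * border_mat n X' y' 0 = border_mat n (X * X') (X *\<^sub>v y') 0"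
proof (rule eq_matI)
  fix i j assume "i < dim_row (border_mat n (X * X') (X *\<^sub>v y') 0)"
    and "j < dim_col (border_mat n (X * X') (X *\<^sub>v y') 0)"
  then have i: "i < Suc n" and j: "j < Suc n" by auto
  have "(border_mat n X y 0 * border_mat n X' y' 0) $$ (i,j)
      = (\<Sum>k<Suc n. border_mat n X y 0 $$ (i,k) * border_mat n X' y' 0 $$ (k,j))"
    using i j by (simp add: scalar_prod_def atLeast0LessThan)
  also have "\<dots> = (\<Sum>k<n. border_mat n X y 0 $$ (i,k) * border_mat n X' y' 0 $$ (k,j))"
    using j by (simp add: border_mat_def)
  also have "\<dots> = border_mat n (X * X') (X *\<^sub>v y') 0 $$ (i,j)"
    using i j X y by (auto simp: border_mat_def scalar_prod_def atLeast0LessThan)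
  finally show "(border_mat n X y 0 * border_mat n X' y' 0) $$ (i,j)
      = border_mat n (X * X') (X *\<^sub>v y') 0 $$ (i,j)" .
qed auto

lemma border_mat_pow:
  fixes X :: "'a::comm_ring_1 mat"
  assumes X: "X \<in> carrier_mat n n" and y: "y \<in> carrier_vec n"
  shows "border_mat n X y 0 ^\<^sub>m (Suc k) = border_mat n (X ^\<^sub>m (Suc k)) (X ^\<^sub>m k *\<^sub>v y) 0"
proof (induction k)
  case 0
  then show ?case using X y by simp
next
  case (Suc k)
  have "border_mat n X y 0 ^\<^sub>m (Suc (Suc k)) = border_mat n (X ^\<^sub>m (Suc k)) (X ^\<^sub>m k *\<^sub>v y) 0 * border_mat n X y 0"
    using Suc by simp
  also have "\<dots> = border_mat n (X ^\<^sub>m (Suc k) * X) (X ^\<^sub>m (Suc k) *\<^sub>v y) 0"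
    using X y by (intro border_mat_mult) auto
  finally show ?case by simp
qed

lemma border_mat_mult_vec:
  fixes X :: "'a::comm_ring_1 mat"
  assumes X: "X \<in> carrier_mat n n" and y: "y \<in> carrier_vec n" and v: "v \<in> carrier_vec (Suc n)"
  shows "border_mat n X y c *\<^sub>v v
    = vec (Suc n) (\<lambda>i. if i < n then (X *\<^sub>v vec_first v n) $ i + y $ i * v $ n else c * v $ n)"
proof (rule eq_vecI)
  fix i assume "i < dim_vec (vec (Suc n)
    (\<lambda>i. if i < n then (X *\<^sub>v vec_first v n) $ i + y $ i * v $ n else c * v $ n))"
  then have i: "i < Suc n" by simp
  have "(border_mat n X y c *\<^sub>v v) $ i = (\<Sum>k<Suc n. border_mat n X y c $$ (i,k) * v $ k)"
    using i v by (simp add: scalar_prod_def atLeast0LessThan)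
  also have "\<dots> = (\<Sum>k<n. border_mat n X y c $$ (i,k) * v $ k) + border_mat n X y c $$ (i,n) * v $ n"
    by simp
  also have "\<dots> = (if i < n then (X *\<^sub>v vec_first v n) $ i + y $ i * v $ n else c * v $ n)"
    using i X y by (auto simp: border_mat_def scalar_prod_def atLeast0LessThan)
  finally show "(border_mat n X y c *\<^sub>v v) $ i = vec (Suc n)
    (\<lambda>i. if i < n then (X *\<^sub>v vec_first v n) $ i + y $ i * v $ n else c * v $ n) $ i"
    using i by simp
qed simp

lemma mem_mat_kernel_border_mat:
  fixes X :: "'a::comm_ring_1 mat"
  assumes X: "X \<in> carrier_mat n n" and y: "y \<in> carrier_vec n"
  shows "v \<in> mat_kernel (border_mat n X y c) \<longleftrightarrow>
    v \<in> carrier_vec (Suc n) \<and> X *\<^sub>v vec_first v n + v $ n \<cdot>\<^sub>v y = 0\<^sub>v n \<and> c * v $ n = 0"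
proof (cases "v \<in> carrier_vec (Suc n)")
  case True
  have "border_mat n X y c *\<^sub>v v = 0\<^sub>v (Suc n) \<longleftrightarrow>
      (\<forall>i<Suc n. (border_mat n X y c *\<^sub>v v) $ i = 0)"
    by (auto simp: vec_eq_iff)
  also have "\<dots> \<longleftrightarrow> (\<forall>i<n. (X *\<^sub>v vec_first v n + v $ n \<cdot>\<^sub>v y) $ i = 0) \<and> c * v $ n = 0"
    using X y by (auto simp: border_mat_mult_vec[OF X y True] less_Suc_eq mult.commute)
  also have "\<dots> \<longleftrightarrow> X *\<^sub>v vec_first v n + v $ n \<cdot>\<^sub>v y = 0\<^sub>v n \<and> c * v $ n = 0"
    using X y by (auto simp: vec_eq_iff)
  finally show ?thesis using True unfolding mat_kernel_def by simp
qed (simp add: mat_kernel_def)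

definition shear_mat :: "nat \<Rightarrow> 'a::comm_ring_1 vec \<Rightarrow> 'a mat" where
  "shear_mat n d = mat (Suc n) (Suc n) (\<lambda>(i,j). if i = j then 1 else if i < n \<and> j = n then d $ i else 0)"

lemma shear_mat_carrier[simp]: "shear_mat n d \<in> carrier_mat (Suc n) (Suc n)"
  and dim_shear_mat[simp]: "dim_row (shear_mat n d) = Suc n" "dim_col (shear_mat n d) = Suc n"
  unfolding shear_mat_def by auto

lemma shear_mat_inverse:
  fixes d :: "'a::comm_ring_1 vec"
  assumes d: "d \<in> carrier_vec n"
  shows "shear_mat n d * shear_mat n (- d) = 1\<^sub>m (Suc n)"
proof (rule eq_matI)
  fix i j assume "i < dim_row (1\<^sub>m (Suc n) :: 'a mat)" "j < dim_col (1\<^sub>m (Suc n) :: 'a mat)"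
  then have i: "i < Suc n" and j: "j < Suc n" by auto
  have "(shear_mat n d * shear_mat n (- d)) $$ (i,j)
      = (\<Sum>k<Suc n. shear_mat n d $$ (i,k) * shear_mat n (- d) $$ (k,j))"
    using i j by (simp add: scalar_prod_def atLeast0LessThan)
  also have "\<dots> = (\<Sum>k\<in>{i,j}. shear_mat n d $$ (i,k) * shear_mat n (- d) $$ (k,j))"
    using i j by (intro sum.mono_neutral_right) (auto simp: shear_mat_def)
  also have "\<dots> = 1\<^sub>m (Suc n) $$ (i,j)"
    using i j d by (cases "i = j") (auto simp: shear_mat_def)
  finally show "(shear_mat n d * shear_mat n (- d)) $$ (i,j) = 1\<^sub>m (Suc n) $$ (i,j)" .
qed auto

lemma border_mat_mult_shear_mat:
  fixes X :: "'a::comm_ring_1 mat"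
  assumes X: "X \<in> carrier_mat n n" and d: "d \<in> carrier_vec n"
  shows "border_mat n X (0\<^sub>v n) 0 * shear_mat n d = border_mat n X (X *\<^sub>v d) 0"
proof (rule eq_matI)
  fix i j assume "i < dim_row (border_mat n X (X *\<^sub>v d) 0)" "j < dim_col (border_mat n X (X *\<^sub>v d) 0)"
  then have i: "i < Suc n" and j: "j < Suc n" by auto
  have "(border_mat n X (0\<^sub>v n) 0 * shear_mat n d) $$ (i,j)
      = (\<Sum>k<n. border_mat n X (0\<^sub>v n) 0 $$ (i,k) * shear_mat n d $$ (k,j))"
    using i j by (simp add: scalar_prod_def atLeast0LessThan border_mat_def)
  also have "\<dots> = (\<Sum>k<n. if i < n then X $$ (i,k) * (if j < n then of_bool (k = j) else d $ k) else 0)"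
    using i j by (intro sum.cong) (auto simp: border_mat_def shear_mat_def)
  also have "\<dots> = border_mat n X (X *\<^sub>v d) 0 $$ (i,j)"
    using i j X d by (auto simp: border_mat_def scalar_prod_def atLeast0LessThan of_bool_def
        if_distrib[of "\<lambda>x. _ * x"] sum.delta cong: if_cong)
  finally show "(border_mat n X (0\<^sub>v n) 0 * shear_mat n d) $$ (i,j) = border_mat n X (X *\<^sub>v d) 0 $$ (i,j)" .
qed auto

lemma kernel_dim_border_mat:
  fixes X :: "'a::field mat"
  assumes X: "X \<in> carrier_mat n n" and d: "d \<in> carrier_vec n"
  shows "kernel_dim (border_mat n X (X *\<^sub>v d) 0) = kernel_dim X + 1"
proof -
  \<comment> \<open>The shear moves the column \<open>X d\<close> away, leaving the block diagonal matrix \<open>diag (X, 0)\<close>.\<close>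
  have "kernel_dim (border_mat n X (X *\<^sub>v d) 0)
      = kernel.dim (Suc n) (border_mat n X (0\<^sub>v n) 0 * shear_mat n d)"
    unfolding kernel_dim_def border_mat_mult_shear_mat[OF X d] by simp
  also have "\<dots> = kernel.dim (Suc n) (border_mat n X (0\<^sub>v n) 0)"
    by (rule mat_kernel_dim_mult_eq_right[OF border_mat_carrier shear_mat_carrier shear_mat_carrier
          shear_mat_inverse[OF d]])
  also have "border_mat n X (0\<^sub>v n) 0 = four_block_mat X (0\<^sub>m n 1) (0\<^sub>m 1 n) (0\<^sub>m 1 1)"
    using X by (intro eq_matI) (auto simp: border_mat_def four_block_mat_def)
  also have "kernel.dim (Suc n) \<dots> = kernel.dim n X + kernel.dim 1 (0\<^sub>m 1 1 :: 'a mat)"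
    using kernel_four_block_0_mat[OF refl X zero_carrier_mat[of 1 1]] by simp
  finally show ?thesis using X kernel_dim_zero_mat[of 1 1] unfolding kernel_dim_def by simp
qed

lemma aA_bracket_eq:
  fixes A :: "'a::comm_ring_1 mat"
  assumes A: "A \<in> carrier_mat n n"
  shows "aA_bracket A (Suc n) u v
    = embed_vec n (A *\<^sub>v (v $ n \<cdot>\<^sub>v vec_first u n - u $ n \<cdot>\<^sub>v vec_first v n))"
  unfolding aA_bracket_def embed_vec_def using A
  by (intro eq_vecI) (auto simp: scalar_prod_def atLeast0LessThan mult.commute intro!: sum.cong)

lemma ad_mat_aA_bracket:
  fixes A :: "'a::comm_ring_1 mat"
  assumes A: "A \<in> carrier_mat n n"
  shows "ad_mat (aA_bracket A (Suc n)) (Suc n) u = border_mat n ((- u $ n) \<cdot>\<^sub>m A) (A *\<^sub>v vec_first u n) 0"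
proof (rule eq_matI)
  fix i l assume "i < dim_row (border_mat n ((- u $ n) \<cdot>\<^sub>m A) (A *\<^sub>v vec_first u n) 0)"
    and "l < dim_col (border_mat n ((- u $ n) \<cdot>\<^sub>m A) (A *\<^sub>v vec_first u n) 0)"
  then have i: "i < Suc n" and l: "l < Suc n" by auto
  have "ad_mat (aA_bracket A (Suc n)) (Suc n) u $$ (i, l) = (if i < n then
      (\<Sum>j<n. A $$ (i, j) * (u $ j * unit_vec (Suc n) l $ n - u $ n * unit_vec (Suc n) l $ j)) else 0)"
    using i l by (simp add: ad_mat_def aA_bracket_def)
  also have "\<dots> = (if i < n then (\<Sum>j<n. if l < n then (if j = l then - (u $ n * A $$ (i, l)) else 0)
      else A $$ (i, j) * u $ j) else 0)"
    using l by (auto simp: less_Suc_eq intro!: sum.cong)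
  also have "\<dots> = border_mat n ((- u $ n) \<cdot>\<^sub>m A) (A *\<^sub>v vec_first u n) 0 $$ (i, l)"
    using i l A by (auto simp: border_mat_def scalar_prod_def atLeast0LessThan)
  finally show "ad_mat (aA_bracket A (Suc n)) (Suc n) u $$ (i, l)
    = border_mat n ((- u $ n) \<cdot>\<^sub>m A) (A *\<^sub>v vec_first u n) 0 $$ (i, l)" .
qed (auto simp: ad_mat_def)

section \<open>The invariant \<open>\<CC>\<^sub>p\<^sub>q\<close>\<close>

lemma pow_ad_mat_aA_bracket:
  fixes A :: "'a::comm_ring_1 mat"
  assumes A: "A \<in> carrier_mat n n" and k: "k \<ge> 1"
  obtains y where "y \<in> carrier_vec n"
    "ad_mat (aA_bracket A (Suc n)) (Suc n) u ^\<^sub>m k = border_mat n ((- u $ n) ^ k \<cdot>\<^sub>m A ^\<^sub>m k) y 0"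
proof -
  obtain k' where k': "k = Suc k'" using k by (cases k) auto
  let ?X = "(- u $ n) \<cdot>\<^sub>m A" and ?y = "A *\<^sub>v vec_first u n"
  have X: "?X \<in> carrier_mat n n" and y: "?y \<in> carrier_vec n" using A by auto
  have "ad_mat (aA_bracket A (Suc n)) (Suc n) u ^\<^sub>m k
      = border_mat n ((- u $ n) ^ k \<cdot>\<^sub>m A ^\<^sub>m k) (?X ^\<^sub>m k' *\<^sub>v ?y) 0"
    unfolding ad_mat_aA_bracket[OF A] k' border_mat_pow[OF X y] smult_pow_mat[OF A] ..
  moreover have "?X ^\<^sub>m k' *\<^sub>v ?y \<in> carrier_vec n"
    by (rule mult_mat_vec_carrier[OF pow_carrier_mat[OF X] y])
  ultimately show ?thesis using that by blast
qed

lemma trace_pow_ad_mat_aA_bracket: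
  fixes A :: "'a::comm_ring_1 mat"
  assumes A: "A \<in> carrier_mat n n" and k: "k \<ge> 1"
  shows "trace (ad_mat (aA_bracket A (Suc n)) (Suc n) u ^\<^sub>m k) = (- u $ n) ^ k * trace (A ^\<^sub>m k)"
proof -
  obtain y where "ad_mat (aA_bracket A (Suc n)) (Suc n) u ^\<^sub>m k
      = border_mat n ((- u $ n) ^ k \<cdot>\<^sub>m A ^\<^sub>m k) y 0"
    using pow_ad_mat_aA_bracket[OF A k] by blast
  then show ?thesis using A by (simp add: trace_border_mat[of _ n] trace_smult_mat[of _ n])
qed

lemma trace_pow_ad_mat_mult_pow_ad_mat_aA_bracket:
  fixes A :: "'a::comm_ring_1 mat"
  assumes A: "A \<in> carrier_mat n n" and p: "p \<ge> 1" and q: "q \<ge> 1"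
  shows "trace (ad_mat (aA_bracket A (Suc n)) (Suc n) u ^\<^sub>m p * ad_mat (aA_bracket A (Suc n)) (Suc n) v ^\<^sub>m q)
    = (- u $ n) ^ p * (- v $ n) ^ q * trace (A ^\<^sub>m (p + q))"
proof -
  let ?ad = "ad_mat (aA_bracket A (Suc n)) (Suc n)"
  let ?U = "(- u $ n) ^ p \<cdot>\<^sub>m A ^\<^sub>m p" and ?V = "(- v $ n) ^ q \<cdot>\<^sub>m A ^\<^sub>m q"
  obtain y where ad_u: "?ad u ^\<^sub>m p = border_mat n ?U y 0"
    using pow_ad_mat_aA_bracket[OF A p] by blast
  obtain z where z: "z \<in> carrier_vec n" and ad_v: "?ad v ^\<^sub>m q = border_mat n ?V z 0"
    using pow_ad_mat_aA_bracket[OF A q] by blast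
  have Ap: "A ^\<^sub>m p \<in> carrier_mat n n" and Aq: "A ^\<^sub>m q \<in> carrier_mat n n" using A by auto
  have "?ad u ^\<^sub>m p * ?ad v ^\<^sub>m q = border_mat n (?U * ?V) (?U *\<^sub>v z) 0"
    unfolding ad_u ad_v using Ap Aq z by (intro border_mat_mult) auto
  also have "?U * ?V = ((- u $ n) ^ p * (- v $ n) ^ q) \<cdot>\<^sub>m (A ^\<^sub>m p * A ^\<^sub>m q)"
    using Ap Aq by (subst mult_smult_assoc_mat[of _ n n _ n]) (auto simp: mult_smult_distrib[of _ n n _ n])
  also have "A ^\<^sub>m p * A ^\<^sub>m q = A ^\<^sub>m (p + q)" by (rule pow_mat_add[OF A])
  finally show ?thesis using A by (simp add: trace_border_mat[of _ n] trace_smult_mat[of _ n])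
qed

lemma Cpq_aA_bracket:
  fixes A :: "'a::field mat"
  assumes A: "A \<in> carrier_mat n n" and p: "p \<ge> 1" and q: "q \<ge> 1"
    and tp: "trace (A ^\<^sub>m p) \<noteq> 0" and tq: "trace (A ^\<^sub>m q) \<noteq> 0"
    and tpq: "trace (A ^\<^sub>m (p + q)) \<noteq> 0"
  shows "Cpq_well_defined_with_value (aA_bracket A (Suc n)) (Suc n) p q
    (trace (A ^\<^sub>m p) * trace (A ^\<^sub>m q) / trace (A ^\<^sub>m (p + q)))"
proof -
  let ?ad = "ad_mat (aA_bracket A (Suc n)) (Suc n)"
  note trace_p = trace_pow_ad_mat_aA_bracket[OF A p]
  note trace_q = trace_pow_ad_mat_aA_bracket[OF A q]
  note trace_pq = trace_pow_ad_mat_mult_pow_ad_mat_aA_bracket[OF A p q]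
  let ?e = "unit_vec (Suc n) n :: 'a vec"
  have witness: "trace (?ad ?e ^\<^sub>m p) \<noteq> 0 \<and> trace (?ad ?e ^\<^sub>m q) \<noteq> 0
      \<and> trace (?ad ?e ^\<^sub>m p * ?ad ?e ^\<^sub>m q) \<noteq> 0"
    unfolding trace_p trace_q trace_pq using tp tq tpq by simp
  have ratio: "trace (?ad u ^\<^sub>m p) * trace (?ad v ^\<^sub>m q) / trace (?ad u ^\<^sub>m p * ?ad v ^\<^sub>m q)
      = trace (A ^\<^sub>m p) * trace (A ^\<^sub>m q) / trace (A ^\<^sub>m (p + q))"
    if "trace (?ad u ^\<^sub>m p * ?ad v ^\<^sub>m q) \<noteq> 0" for u v
  proof -
    let ?c = "(- u $ n) ^ p * (- v $ n) ^ q"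
    have c: "?c \<noteq> 0" using that unfolding trace_pq by auto
    have "trace (?ad u ^\<^sub>m p) * trace (?ad v ^\<^sub>m q) = ?c * (trace (A ^\<^sub>m p) * trace (A ^\<^sub>m q))"
      unfolding trace_p trace_q by (simp add: ac_simps)
    then show ?thesis unfolding trace_pq by (simp only: mult_divide_mult_cancel_left[OF c])
  qed
  show ?thesis
    unfolding Cpq_well_defined_with_value_def Let_def
    using witness ratio by (auto intro!: bexI[of _ ?e])
qed

section \<open>Cartan subalgebras of \<open>\<aa>\<^sub>A\<close>\<close>

text \<open>That the kernels of the powers of \<open>A\<close> stabilise at \<open>A^N\<close> is assumed here; for real and
  complex matrices it is derived from the Jordan normal form.\<close>

locale stable_pow_kernel =
  fixes N :: nat and A :: "'a::field mat"
  assumes A_carrier: "A \<in> carrier_mat N N" and N_pos: "N \<ge> 1"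
    and pow_kernel_subset: "\<And>k. mat_kernel (A ^\<^sub>m k) \<subseteq> mat_kernel (A ^\<^sub>m N)"
begin

abbreviation "B \<equiv> A ^\<^sub>m N"
abbreviation "br \<equiv> aA_bracket A (Suc N)"

lemma B_carrier: "B \<in> carrier_mat N N"
  using A_carrier by simp

lemma dim_A[simp]: "dim_row A = N" "dim_col A = N"
  using A_carrier by auto

lemma pow_mult_vec_carrier[simp]: "A ^\<^sub>m j *\<^sub>v w \<in> carrier_vec N" "A *\<^sub>v w \<in> carrier_vec N"
  using A_carrier unfolding carrier_vec_def carrier_mat_def by auto

lemma B_mult_vec_eq_zero:
  assumes w: "w \<in> carrier_vec N" and Akw: "A ^\<^sub>m k *\<^sub>v w = 0\<^sub>v N"
  shows "B *\<^sub>v w = 0\<^sub>v N"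
proof -
  have "w \<in> mat_kernel (A ^\<^sub>m k)" by (rule mat_kernelI[OF pow_carrier_mat[OF A_carrier] w Akw])
  then have "w \<in> mat_kernel B" using pow_kernel_subset by blast
  then show ?thesis using mat_kernelD[OF B_carrier] by blast
qed

lemma B_A_commute: "w \<in> carrier_vec N \<Longrightarrow> B *\<^sub>v (A *\<^sub>v w) = A *\<^sub>v (B *\<^sub>v w)"
  by (rule pow_mat_mult_vec_commute[OF A_carrier])

lemma bracket_eq: "br u v = embed_vec N (A *\<^sub>v (v $ N \<cdot>\<^sub>v vec_first u N - u $ N \<cdot>\<^sub>v vec_first v N))"
  by (rule aA_bracket_eq[OF A_carrier])

lemma bracket_carrier[simp]: "br u v \<in> carrier_vec (Suc N)"
  unfolding bracket_eq by simp

lemma B_mult_bracket_arg: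
  assumes "B *\<^sub>v vec_first u N = 0\<^sub>v N" "B *\<^sub>v vec_first v N = 0\<^sub>v N"
  shows "B *\<^sub>v (v $ N \<cdot>\<^sub>v vec_first u N - u $ N \<cdot>\<^sub>v vec_first v N) = 0\<^sub>v N"
  unfolding mult_mat_vec_smult_diff[OF B_carrier vec_first_carrier vec_first_carrier] assms by auto

text \<open>The Fitting null component of \<open>ad e\<^sub>n\<close>, which acts as \<open>-A\<close> on the first \<open>N\<close> coordinates
  and kills \<open>e\<^sub>n\<close>.\<close>

definition null_component :: "'a vec set" where
  "null_component = mat_kernel (border_mat N B (0\<^sub>v N) 0)"

lemma mem_null_component:
  "v \<in> null_component \<longleftrightarrow> v \<in> carrier_vec (Suc N) \<and> B *\<^sub>v vec_first v N = 0\<^sub>v N"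
proof -
  have "B *\<^sub>v vec_first v N \<in> carrier_vec N" using B_carrier by simp
  then show ?thesis
    unfolding null_component_def mem_mat_kernel_border_mat[OF B_carrier zero_carrier_vec] by simp
qed

lemma null_component_bracket_closed:
  assumes x: "x \<in> null_component" and y: "y \<in> null_component"
  shows "br x y \<in> null_component"
proof -
  let ?z = "y $ N \<cdot>\<^sub>v vec_first x N - x $ N \<cdot>\<^sub>v vec_first y N"
  have "B *\<^sub>v ?z = 0\<^sub>v N" using x y unfolding mem_null_component by (intro B_mult_bracket_arg) auto
  then have "B *\<^sub>v (A *\<^sub>v ?z) = 0\<^sub>v N" using B_A_commute[of ?z] A_carrier by simp
  then show ?thesis unfolding mem_null_component bracket_eq by simp
qed

lemma null_component_subalgebra: "lie_subalgebra br (Suc N) null_component"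
  unfolding lie_subalgebra_def null_component_def
  using lin_subspace_mat_kernel[OF border_mat_carrier] null_component_bracket_closed
  by (simp add: null_component_def)

definition lower_central_bound :: "nat \<Rightarrow> 'a vec set" where
  "lower_central_bound k = mat_kernel (border_mat N (A ^\<^sub>m (N - k)) (0\<^sub>v N) 1)"

lemma mem_lower_central_bound:
  "v \<in> lower_central_bound k \<longleftrightarrow>
    v \<in> carrier_vec (Suc N) \<and> A ^\<^sub>m (N - k) *\<^sub>v vec_first v N = 0\<^sub>v N \<and> v $ N = 0"
proof -
  have "A ^\<^sub>m (N - k) *\<^sub>v vec_first v N \<in> carrier_vec N" by simp
  then show ?thesis unfolding lower_central_bound_def
    using mem_mat_kernel_border_mat[OF pow_carrier_mat[OF A_carrier] zero_carrier_vec] by auto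
qed

lemma bracket_in_lower_central_bound_1:
  assumes x: "x \<in> null_component" and y: "y \<in> null_component"
  shows "br x y \<in> lower_central_bound 1"
proof -
  let ?z = "y $ N \<cdot>\<^sub>v vec_first x N - x $ N \<cdot>\<^sub>v vec_first y N"
  have z: "?z \<in> carrier_vec N" by simp
  have "B *\<^sub>v ?z = 0\<^sub>v N" using x y unfolding mem_null_component by (intro B_mult_bracket_arg) auto
  moreover have "A ^\<^sub>m (N - 1) *\<^sub>v (A *\<^sub>v ?z) = B *\<^sub>v ?z"
    using pow_mat_Suc_mult_mat_vec[OF A_carrier z, of "N - 1"] N_pos by simp
  ultimately show ?thesis unfolding mem_lower_central_bound bracket_eq by simp
qed

lemma bracket_in_lower_central_bound_Suc:
  assumes y: "y \<in> lower_central_bound k"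
  shows "br x y \<in> lower_central_bound (Suc k)"
proof -
  from y have yN: "y $ N = 0" and Ay: "A ^\<^sub>m (N - k) *\<^sub>v vec_first y N = 0\<^sub>v N"
    unfolding mem_lower_central_bound by auto
  let ?z = "y $ N \<cdot>\<^sub>v vec_first x N - x $ N \<cdot>\<^sub>v vec_first y N"
  have z: "?z = (- x $ N) \<cdot>\<^sub>v vec_first y N" unfolding yN by (intro eq_vecI) auto
  have "A ^\<^sub>m (N - Suc k) *\<^sub>v (A *\<^sub>v ?z) = 0\<^sub>v N"
  proof (cases "k < N")
    case True
    then have "A ^\<^sub>m (N - Suc k) *\<^sub>v (A *\<^sub>v ?z) = A ^\<^sub>m (N - k) *\<^sub>v ?z"
      using pow_mat_Suc_mult_mat_vec[OF A_carrier, of ?z "N - Suc k"] by (simp add: Suc_diff_Suc)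
    also have "\<dots> = (- x $ N) \<cdot>\<^sub>v (A ^\<^sub>m (N - k) *\<^sub>v vec_first y N)"
      unfolding z by (rule mult_mat_vec[OF pow_carrier_mat[OF A_carrier] vec_first_carrier])
    finally show ?thesis unfolding Ay by simp
  next
    case False
    then have "vec_first y N = 0\<^sub>v N" using Ay A_carrier by simp
    then show ?thesis unfolding z using A_carrier by simp
  qed
  then show ?thesis unfolding mem_lower_central_bound bracket_eq by simp
qed

lemma lower_central_null_component:
  "k \<ge> 1 \<Longrightarrow> lower_central br (Suc N) null_component k \<subseteq> lower_central_bound k"
proof (induction k rule: nat_induct_at_least)
  case base
  show ?case unfolding One_nat_def lower_central.simps
    using bracket_in_lower_central_bound_1 lin_subspace_mat_kernel[OF border_mat_carrier]
    by (intro lin_span_subset) (auto simp: lower_central_bound_def)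
next
  case (Suc k)
  then show ?case unfolding lower_central.simps
    using bracket_in_lower_central_bound_Suc lin_subspace_mat_kernel[OF border_mat_carrier]
    by (intro lin_span_subset) (auto simp: lower_central_bound_def)
qed

lemma null_component_nilpotent: "lie_nilpotent br (Suc N) null_component"
proof -
  have "lower_central br (Suc N) null_component N \<subseteq> lower_central_bound N"
    by (rule lower_central_null_component[OF N_pos])
  also have "lower_central_bound N \<subseteq> {0\<^sub>v (Suc N)}"
  proof
    fix v assume "v \<in> lower_central_bound N"
    then have v: "v \<in> carrier_vec (Suc N)" and "vec_first v N = 0\<^sub>v N" and "v $ N = 0"
      unfolding mem_lower_central_bound by auto
    then show "v \<in> {0\<^sub>v (Suc N)}" using embed_vec_vec_first[OF v] by simp
  qed
  finally have "lower_central br (Suc N) null_component N \<subseteq> {0\<^sub>v (Suc N)}" .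
  moreover obtain N' where "N = Suc N'" using N_pos by (cases N) auto
  then have "0\<^sub>v (Suc N) \<in> lower_central br (Suc N) null_component N"
    by (simp add: zero_in_lin_span)
  ultimately show ?thesis unfolding lie_nilpotent_def by blast
qed

lemma null_component_self_normalizing: "lie_normalizer br (Suc N) null_component = null_component"
proof
  show "null_component \<subseteq> lie_normalizer br (Suc N) null_component"
    unfolding lie_normalizer_def using null_component_bracket_closed mem_null_component by auto
  show "lie_normalizer br (Suc N) null_component \<subseteq> null_component"
  proof
    fix x assume "x \<in> lie_normalizer br (Suc N) null_component"
    then have x: "x \<in> carrier_vec (Suc N)"
      and normalizes: "\<And>h. h \<in> null_component \<Longrightarrow> br x h \<in> null_component"
      unfolding lie_normalizer_def by auto
    let ?e = "unit_vec (Suc N) N :: 'a vec"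
    have "?e \<in> null_component"
      unfolding mem_null_component vec_first_unit_vec_last using B_carrier by simp
    then have "B *\<^sub>v vec_first (br x ?e) N = 0\<^sub>v N"
      using normalizes unfolding mem_null_component by blast
    moreover have "br x ?e = embed_vec N (A *\<^sub>v vec_first x N)"
      unfolding bracket_eq vec_first_unit_vec_last
      by (intro arg_cong[of _ _ "\<lambda>w. embed_vec N (A *\<^sub>v w)"] eq_vecI) auto
    ultimately have "B *\<^sub>v (A *\<^sub>v vec_first x N) = 0\<^sub>v N" by simp
    then have "A ^\<^sub>m (Suc N) *\<^sub>v vec_first x N = 0\<^sub>v N"
      unfolding pow_mat_Suc_mult_mat_vec[OF A_carrier vec_first_carrier] .
    then have "B *\<^sub>v vec_first x N = 0\<^sub>v N" by (rule B_mult_vec_eq_zero[OF vec_first_carrier])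
    then show "x \<in> null_component" unfolding mem_null_component using x by auto
  qed
qed

lemma null_component_cartan: "cartan_subalgebra br (Suc N) null_component"
  unfolding cartan_subalgebra_def
  using null_component_subalgebra null_component_nilpotent null_component_self_normalizing by auto

context
  fixes H :: "'a vec set"
  assumes cartan: "cartan_subalgebra br (Suc N) H"
begin

lemma cartan_subspace: "lin_subspace (Suc N) H"
  using cartan unfolding cartan_subalgebra_def lie_subalgebra_def by auto

lemma cartan_carrier: "h \<in> H \<Longrightarrow> h \<in> carrier_vec (Suc N)"
  using lin_subspaceD(1)[OF cartan_subspace] by auto

lemma cartan_normalizerI: "z \<in> carrier_vec (Suc N) \<Longrightarrow> (\<And>h. h \<in> H \<Longrightarrow> br z h \<in> H) \<Longrightarrow> z \<in> H"
  using cartan unfolding cartan_subalgebra_def lie_normalizer_def by blast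

lemma cartan_transversal: "\<exists>x\<in>H. x $ N \<noteq> 0"
proof (rule ccontr)
  assume "\<not> ?thesis"
  then have flat: "\<And>h. h \<in> H \<Longrightarrow> h $ N = 0" by blast
  \<comment> \<open>Then \<open>H\<close> brackets trivially with every vector of vanishing last coordinate \<dots>\<close>
  have flat_in_H: "w \<in> H" if w: "w \<in> carrier_vec (Suc N)" and wN: "w $ N = 0" for w
  proof (rule cartan_normalizerI[OF w])
    fix h assume "h \<in> H"
    then have "h $ N \<cdot>\<^sub>v vec_first w N - w $ N \<cdot>\<^sub>v vec_first h N = 0\<^sub>v N"
      using flat wN by (intro eq_vecI) auto
    then have "br w h = 0\<^sub>v (Suc N)" unfolding bracket_eq using A_carrier by simp
    then show "br w h \<in> H" using lin_subspaceD(2)[OF cartan_subspace] by simp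
  qed
  \<comment> \<open>\<dots> and \<open>e\<^sub>n\<close>, whose brackets all have vanishing last coordinate, normalises \<open>H\<close>.\<close>
  have "unit_vec (Suc N) N \<in> H"
    by (rule cartan_normalizerI) (auto intro: flat_in_H simp: bracket_eq)
  then show False using flat by fastforce
qed

lemma ad_pow_in_lower_central:
  assumes x: "x \<in> H" and h: "h \<in> H" "h $ N = 0"
  shows "embed_vec N ((- x $ N) ^ j \<cdot>\<^sub>v (A ^\<^sub>m j *\<^sub>v vec_first h N)) \<in> lower_central br (Suc N) H j"
proof (induction j)
  case 0
  then show ?case using h embed_vec_vec_first[OF cartan_carrier] by simp
next
  case (Suc j)
  let ?c = "- x $ N"
  let ?w = "?c ^ j \<cdot>\<^sub>v (A ^\<^sub>m j *\<^sub>v vec_first h N)"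
  have w: "?w \<in> carrier_vec N" by simp
  have "br x (embed_vec N ?w) = embed_vec N (A *\<^sub>v (?c \<cdot>\<^sub>v ?w))"
    unfolding bracket_eq vec_first_embed_vec[OF w] index_embed_vec_last
    by (intro arg_cong[of _ _ "\<lambda>w. embed_vec N (A *\<^sub>v w)"] eq_vecI) auto
  also have "A *\<^sub>v (?c \<cdot>\<^sub>v ?w) = ?c ^ Suc j \<cdot>\<^sub>v (A *\<^sub>v (A ^\<^sub>m j *\<^sub>v vec_first h N))"
    using A_carrier by (simp add: mult_mat_vec[of _ N N] smult_smult_assoc)
  also have "A *\<^sub>v (A ^\<^sub>m j *\<^sub>v vec_first h N) = A ^\<^sub>m (Suc j) *\<^sub>v vec_first h N"
    using pow_mat_mult_vec_commute[OF A_carrier vec_first_carrier, of j h]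
      pow_mat_Suc_mult_mat_vec[OF A_carrier vec_first_carrier, of j h] by simp
  finally have "br x (embed_vec N ?w) = embed_vec N (?c ^ Suc j \<cdot>\<^sub>v (A ^\<^sub>m Suc j *\<^sub>v vec_first h N))" .
  moreover have "br x (embed_vec N ?w) \<in> lower_central br (Suc N) H (Suc j)"
    unfolding lower_central.simps using x Suc.IH by (intro in_lin_span) auto
  ultimately show ?case by simp
qed

lemma cartan_flat_part_in_kernel:
  assumes x: "x \<in> H" "x $ N \<noteq> 0" and h: "h \<in> H" "h $ N = 0"
  shows "B *\<^sub>v vec_first h N = 0\<^sub>v N"
proof -
  from cartan obtain k where lc: "lower_central br (Suc N) H k = {0\<^sub>v (Suc N)}"
    unfolding cartan_subalgebra_def lie_nilpotent_def by blast
  let ?w = "(- x $ N) ^ k \<cdot>\<^sub>v (A ^\<^sub>m k *\<^sub>v vec_first h N)"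
  have "embed_vec N ?w \<in> {0\<^sub>v (Suc N)}"
    using ad_pow_in_lower_central[OF x(1) h, of k] unfolding lc .
  then have "?w = 0\<^sub>v N" using embed_vec_eq_zero_iff[of ?w N] by simp
  then have "A ^\<^sub>m k *\<^sub>v vec_first h N = 0\<^sub>v N"
    by (rule smult_vec_eq_zero) (use x(2) in simp_all)
  then show ?thesis by (rule B_mult_vec_eq_zero[OF vec_first_carrier])
qed

lemma cartan_contains_kernel:
  assumes w: "w \<in> carrier_vec N" and Bw: "B *\<^sub>v w = 0\<^sub>v N"
  shows "embed_vec N w \<in> H"
proof -
  \<comment> \<open>Descending induction: \<open>[embed u, h] = h\<^sub>N embed (A u)\<close>, so \<open>embed u\<close> normalises \<open>H\<close>
    as soon as \<open>embed (A u) \<in> H\<close>.\<close>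
  have "embed_vec N (A ^\<^sub>m (N - m) *\<^sub>v w) \<in> H" if "m \<le> N" for m
    using that
  proof (induction m)
    case 0
    then show ?case using Bw lin_subspaceD(2)[OF cartan_subspace] by simp
  next
    case (Suc m)
    let ?u = "A ^\<^sub>m (N - Suc m) *\<^sub>v w"
    have u: "?u \<in> carrier_vec N" by simp
    have Au: "A *\<^sub>v ?u = A ^\<^sub>m (N - m) *\<^sub>v w"
      using pow_mat_mult_vec_commute[OF A_carrier w, of "N - Suc m"]
        pow_mat_Suc_mult_mat_vec[OF A_carrier w, of "N - Suc m"] Suc.prems
      by (simp add: Suc_diff_Suc)
    show ?case
    proof (rule cartan_normalizerI)
      fix h assume "h \<in> H"
      have "br (embed_vec N ?u) h = embed_vec N (A *\<^sub>v (h $ N \<cdot>\<^sub>v ?u))"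
        unfolding bracket_eq vec_first_embed_vec[OF u] index_embed_vec_last
        by (intro arg_cong[of _ _ "\<lambda>w. embed_vec N (A *\<^sub>v w)"] eq_vecI) auto
      also have "\<dots> = h $ N \<cdot>\<^sub>v embed_vec N (A ^\<^sub>m (N - m) *\<^sub>v w)"
        unfolding mult_mat_vec[OF A_carrier u] Au by (simp add: embed_vec_smult)
      finally show "br (embed_vec N ?u) h \<in> H"
        using lin_subspaceD(4)[OF cartan_subspace Suc.IH] Suc.prems by simp
    qed simp
  qed
  from this[of N] show ?thesis using A_carrier w by simp
qed

lemma cartan_eq_mat_kernel:
  assumes x: "x \<in> H" "x $ N \<noteq> 0"
  defines "d \<equiv> (- (1 / x $ N)) \<cdot>\<^sub>v vec_first x N"
  shows "H = mat_kernel (border_mat N B (B *\<^sub>v d) 0)"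
proof -
  have xc: "x \<in> carrier_vec (Suc N)" using cartan_carrier[OF x(1)] .
  define g where "g v = v - (v $ N / x $ N) \<cdot>\<^sub>v x" for v
  have g: "g v \<in> carrier_vec (Suc N)" "g v $ N = 0" if "v \<in> carrier_vec (Suc N)" for v
    using that xc x(2) by (auto simp: g_def)
  have B_g: "B *\<^sub>v vec_first (g v) N = B *\<^sub>v vec_first v N + v $ N \<cdot>\<^sub>v (B *\<^sub>v d)"
    if v: "v \<in> carrier_vec (Suc N)" for v
  proof -
    have "B *\<^sub>v vec_first (g v) N = B *\<^sub>v vec_first v N - (v $ N / x $ N) \<cdot>\<^sub>v (B *\<^sub>v vec_first x N)"
      using v xc B_carrier unfolding g_def
      by (simp add: vec_first_diff vec_first_smult mult_minus_distrib_mat_vec mult_mat_vec)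
    then show ?thesis
      unfolding d_def mult_mat_vec[OF B_carrier vec_first_carrier]
      using B_carrier by (auto simp: field_simps intro!: eq_vecI)
  qed
  have mem_kernel: "v \<in> mat_kernel (border_mat N B (B *\<^sub>v d) 0) \<longleftrightarrow>
      v \<in> carrier_vec (Suc N) \<and> B *\<^sub>v vec_first (g v) N = 0\<^sub>v N" for v
    using mem_mat_kernel_border_mat[OF B_carrier, of "B *\<^sub>v d" v 0] B_g[of v] B_carrier
    by (auto simp: d_def)
  show ?thesis
  proof (intro equalityI subsetI)
    fix v assume v: "v \<in> H"
    have "g v \<in> H"
      unfolding g_def using v x(1) lin_subspaceD(4)[OF cartan_subspace]
      by (intro lin_subspace_diff[OF cartan_subspace]) auto
    then show "v \<in> mat_kernel (border_mat N B (B *\<^sub>v d) 0)"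
      unfolding mem_kernel using cartan_flat_part_in_kernel[OF x] g[OF cartan_carrier[OF v]]
        cartan_carrier[OF v] by simp
  next
    fix v assume "v \<in> mat_kernel (border_mat N B (B *\<^sub>v d) 0)"
    then have v: "v \<in> carrier_vec (Suc N)" and "B *\<^sub>v vec_first (g v) N = 0\<^sub>v N"
      unfolding mem_kernel by auto
    then have "embed_vec N (vec_first (g v) N) \<in> H" by (intro cartan_contains_kernel) auto
    then have "g v \<in> H" using embed_vec_vec_first[OF g[OF v]] by simp
    moreover have "v = g v + (v $ N / x $ N) \<cdot>\<^sub>v x" using v xc by (intro eq_vecI) (auto simp: g_def)
    ultimately show "v \<in> H"
      using lin_subspaceD(3,4)[OF cartan_subspace] x(1) by metis
  qed
qed

lemma lin_dim_cartan: "lin_dim (Suc N) H = kernel_dim B + 1"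
proof -
  obtain x where x: "x \<in> H" "x $ N \<noteq> 0" using cartan_transversal by blast
  let ?d = "(- (1 / x $ N)) \<cdot>\<^sub>v vec_first x N"
  have "lin_dim (Suc N) H = kernel_dim (border_mat N B (B *\<^sub>v ?d) 0)"
    unfolding cartan_eq_mat_kernel[OF x] by (rule lin_dim_mat_kernel[OF border_mat_carrier])
  also have "\<dots> = kernel_dim B + 1" by (rule kernel_dim_border_mat[OF B_carrier]) simp
  finally show ?thesis .
qed

end

end

lemma cartan_subalgebras_aA_bracket:
  fixes A :: "'a::field mat"
  assumes A: "A \<in> carrier_mat N N" and N: "N \<ge> 1"
    and dim: "\<And>k. k \<ge> N \<Longrightarrow> kernel_dim (A ^\<^sub>m k) = Polynomial.order 0 (char_poly A)"
  shows "(\<exists>H. cartan_subalgebra (aA_bracket A (Suc N)) (Suc N) H) \<and>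
    (\<forall>H. cartan_subalgebra (aA_bracket A (Suc N)) (Suc N) H \<longrightarrow>
      lin_dim (Suc N) H = Polynomial.order 0 (char_poly A) + 1)"
proof -
  have "mat_kernel (A ^\<^sub>m k) \<subseteq> mat_kernel (A ^\<^sub>m N)" for k
    using dim by (intro mat_kernel_pow_subset_of_dim[OF A]) simp
  then interpret stable_pow_kernel N A using A N by unfold_locales
  show ?thesis using null_component_cartan lin_dim_cartan dim[of N] by auto
qed

theorem lemma2:
  fixes n p q :: nat
  assumes "n \<ge> 2" and "p \<ge> 1" and "q \<ge> 1"
  shows
   "(\<forall>(A :: real mat) (lam :: complex list).
       A \<in> carrier_mat (n - 1) (n - 1) \<longrightarrow>
       char_poly (map_mat complex_of_real A) = (\<Prod>l\<leftarrow>lam. [:- l, 1:]) \<longrightarrow>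
       trace (A ^\<^sub>m p) \<noteq> 0 \<longrightarrow> trace (A ^\<^sub>m q) \<noteq> 0 \<longrightarrow> trace (A ^\<^sub>m (p + q)) \<noteq> 0 \<longrightarrow>
       Cpq_well_defined_with_value (aA_bracket A n) n p q
          (trace (A ^\<^sub>m p) * trace (A ^\<^sub>m q) / trace (A ^\<^sub>m (p + q))) \<and>
       complex_of_real (trace (A ^\<^sub>m p) * trace (A ^\<^sub>m q) / trace (A ^\<^sub>m (p + q))) =
         (\<Sum>l\<leftarrow>lam. l ^ p) * (\<Sum>l\<leftarrow>lam. l ^ q) / (\<Sum>l\<leftarrow>lam. l ^ (p + q)))
    \<and>
    (\<forall>(A :: complex mat) (lam :: complex list).
       A \<in> carrier_mat (n - 1) (n - 1) \<longrightarrow>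
       char_poly A = (\<Prod>l\<leftarrow>lam. [:- l, 1:]) \<longrightarrow>
       trace (A ^\<^sub>m p) \<noteq> 0 \<longrightarrow> trace (A ^\<^sub>m q) \<noteq> 0 \<longrightarrow> trace (A ^\<^sub>m (p + q)) \<noteq> 0 \<longrightarrow>
       Cpq_well_defined_with_value (aA_bracket A n) n p q
          (trace (A ^\<^sub>m p) * trace (A ^\<^sub>m q) / trace (A ^\<^sub>m (p + q))) \<and>
       trace (A ^\<^sub>m p) * trace (A ^\<^sub>m q) / trace (A ^\<^sub>m (p + q)) =
         (\<Sum>l\<leftarrow>lam. l ^ p) * (\<Sum>l\<leftarrow>lam. l ^ q) / (\<Sum>l\<leftarrow>lam. l ^ (p + q)))
    \<and>
    (\<forall>A :: real mat. A \<in> carrier_mat (n - 1) (n - 1) \<longrightarrow>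
       (\<exists>H. cartan_subalgebra (aA_bracket A n) n H) \<and>
       (\<forall>H. cartan_subalgebra (aA_bracket A n) n H \<longrightarrow>
            lin_dim n H = Polynomial.order 0 (char_poly A) + 1))
    \<and>
    (\<forall>A :: complex mat. A \<in> carrier_mat (n - 1) (n - 1) \<longrightarrow>
       (\<exists>H. cartan_subalgebra (aA_bracket A n) n H) \<and>
       (\<forall>H. cartan_subalgebra (aA_bracket A n) n H \<longrightarrow>
            lin_dim n H = Polynomial.order 0 (char_poly A) + 1))"
proof -
  obtain N where n: "n = Suc N" and N: "N \<ge> 1" using assms(1) by (cases n) auto
  note Cpq = Cpq_aA_bracket[of _ N, OF _ assms(2,3)]
  note rank = cartan_subalgebras_aA_bracket[OF _ N]
  show ?thesis
    unfolding n diff_Suc_1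
  proof (intro conjI allI impI)
    fix A :: "real mat" and lam :: "complex list"
    assume "A \<in> carrier_mat N N" "char_poly (map_mat complex_of_real A) = (\<Prod>l\<leftarrow>lam. [:- l, 1:])"
    then show "complex_of_real (trace (A ^\<^sub>m p) * trace (A ^\<^sub>m q) / trace (A ^\<^sub>m (p + q))) =
        (\<Sum>l\<leftarrow>lam. l ^ p) * (\<Sum>l\<leftarrow>lam. l ^ q) / (\<Sum>l\<leftarrow>lam. l ^ (p + q))"
      by (simp add: trace_pow_mat_of_real_char_poly[symmetric])
  next
    fix A :: "complex mat" and lam :: "complex list"
    assume "A \<in> carrier_mat N N" "char_poly A = (\<Prod>l\<leftarrow>lam. [:- l, 1:])"
    then show "trace (A ^\<^sub>m p) * trace (A ^\<^sub>m q) / trace (A ^\<^sub>m (p + q)) =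
        (\<Sum>l\<leftarrow>lam. l ^ p) * (\<Sum>l\<leftarrow>lam. l ^ q) / (\<Sum>l\<leftarrow>lam. l ^ (p + q))"
      by (simp add: trace_pow_mat_char_poly)
  qed (use Cpq rank kernel_dim_pow_mat_eq_order_real kernel_dim_pow_mat_eq_order in blast)+
qed

end
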